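(* Let $G$ be a finite simple undirected graph with property S. Then $G$ is a $\mathcal{P}$-position of Graph Nimors (i.e. the player not to move has a winning strategy, equivalently its Nim value is $0$) if and only if $G$ has an even number of edges.
   Context: Graph Nimors is a two-player impartial game played on a finite simple undirected graph. A move consists of either deleting one edge, or contracting one edge $uv$: removing the adjacent vertices $u,v$ and inserting a new vertex $w$ adjacent to every vertex (other than $u,v$) that was adjacent to $u$ or to $v$ (so the result is again simple). Players alternate; when no edges remain no move is possible, and the player who made the last move wins (normal play). A position is a $\mathcal{P}$-position if the previous player (the one not about to move) can force a win, and an $\mathcal{N}$-position if the next player to move can force a win. The blocks of a graph are its maximal biconnected subgraphs, where a single edge not on any cycle also counts as a block; the edges of a graph are partitioned among its blocks. A graph $G$ has property S if it contains no edge both of whose endpoints have degree greater than two, and no block of $G$ is a triangle (a 3-cycle). *)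

theory Defs
  imports Main
begin

type_synonym 'a graph = "'a set \<times> 'a set set"

definition simple_graph :: "'a graph \<Rightarrow> bool" where
  "simple_graph G \<longleftrightarrow> finite (fst G) \<and>
     (\<forall>e\<in>snd G. \<exists>u v. u \<noteq> v \<and> u \<in> fst G \<and> v \<in> fst G \<and> e = {u, v})"

definition degree :: "'a set set \<Rightarrow> 'a \<Rightarrow> nat" where
  "degree E x = card {e\<in>E. x \<in> e}"

text \<open>Moves of Graph Nimors. Contracting the edge uv: the new vertex w is represented
  by reusing the name u (the result is isomorphic to the one with a fresh vertex).\<close>

definition delete_edge :: "'a graph \<Rightarrow> 'a set \<Rightarrow> 'a graph" where
  "delete_edge G e = (fst G, snd G - {e})"

definition contract_edge :: "'a graph \<Rightarrow> 'a \<Rightarrow> 'a \<Rightarrow> 'a graph" where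
  "contract_edge G u v =
     (fst G - {v},
      {e\<in>snd G. v \<notin> e} \<union> {{u, x} | x. {v, x} \<in> snd G \<and> x \<noteq> u})"

definition nimors_move :: "'a graph \<Rightarrow> 'a graph \<Rightarrow> bool" where
  "nimors_move G G' \<longleftrightarrow>
     (\<exists>e\<in>snd G. G' = delete_edge G e) \<or>
     (\<exists>u v. u \<noteq> v \<and> {u, v} \<in> snd G \<and> G' = contract_edge G u v)"

text \<open>Since every move removes at least one edge the game is
  finite, so the least fixed point below is the usual recursive characterisation:
  a position is a P-position iff every move leads to a position from which some move
  reaches a P-position (i.e. every move leads to an N-position).\<close>

inductive P_position :: "'a graph \<Rightarrow> bool" where
  "(\<And>G'. nimors_move G G' \<Longrightarrow> \<exists>G''. nimors_move G' G'' \<and> P_position G'') \<Longrightarrow> P_position G"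

definition edge_adj :: "'a set set \<Rightarrow> 'a \<Rightarrow> 'a \<Rightarrow> bool" where
  "edge_adj F x y \<longleftrightarrow> {x, y} \<in> F"

definition connected_edges :: "'a set set \<Rightarrow> 'a set \<Rightarrow> bool" where
  "connected_edges F W \<longleftrightarrow> (\<forall>x\<in>W. \<forall>y\<in>W. (edge_adj F)\<^sup>*\<^sup>* x y)"

definition nonseparable :: "'a set set \<Rightarrow> bool" where
  "nonseparable F \<longleftrightarrow> F \<noteq> {} \<and> connected_edges F (\<Union>F) \<and>
     (\<forall>z\<in>\<Union>F. connected_edges {e\<in>F. z \<notin> e} (\<Union>F - {z}))"

definition is_block :: "'a set set \<Rightarrow> 'a set set \<Rightarrow> bool" where
  "is_block E F \<longleftrightarrow> F \<subseteq> E \<and> nonseparable F \<and>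
     (\<forall>F'. F \<subseteq> F' \<and> F' \<subseteq> E \<and> nonseparable F' \<longrightarrow> F' = F)"

definition is_triangle :: "'a set set \<Rightarrow> bool" where
  "is_triangle F \<longleftrightarrow> (\<exists>a b c. a \<noteq> b \<and> b \<noteq> c \<and> a \<noteq> c \<and> F = {{a, b}, {b, c}, {a, c}})"

definition property_S :: "'a graph \<Rightarrow> bool" where
  "property_S G \<longleftrightarrow>
     (\<forall>u v. {u, v} \<in> snd G \<longrightarrow> \<not> (degree (snd G) u > 2 \<and> degree (snd G) v > 2)) \<and>
     \<not> (\<exists>F. is_block (snd G) F \<and> is_triangle F)"

end

theory Submission
  imports Defs "HOL-Combinatorics.Transposition"
begin

text \<open>
  Under property S every triangle has two vertices of degree at most two and is therefore a
  block, so property S just says that no edge joins two vertices of degree greater than two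
  and that there are no triangles at all; in this form it is inherited by subgraphs and
  isomorphic copies.  The theorem then follows by induction on the number of edges from one
  observation: whatever move is made in such a graph G with at least two edges, the opponent
  can delete one further edge so that the result is an isomorphic copy of a subgraph of G
  with exactly two edges fewer.  Deleting an edge of G is answered by deleting any other
  edge.  When contracting uv we may, up to swapping u and v, assume that the vanishing
  vertex v has degree at most two: if uv is the only edge at v, the contraction just deletes
  uv; otherwise the second edge vx at v becomes the edge ux, which is new because G has no
  triangles, and deleting it leaves G without uv and vx.  Hence from an even graph every move
  can be answered by a move to an even graph, while from an odd graph deleting any edge
  reaches an even graph.
\<close>

lemma simple_graph_finite_edges:
  assumes "simple_graph G"
  shows "finite (snd G)"
proof -
  have "snd G \<subseteq> Pow (fst G)" and "finite (fst G)"
    using assms unfolding simple_graph_def by auto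
  then show ?thesis
    by (meson finite_Pow_iff finite_subset)
qed

lemma simple_graph_edgeE:
  assumes "simple_graph G" and "e \<in> snd G"
  obtains p q where "p \<noteq> q" "p \<in> fst G" "q \<in> fst G" "e = {p, q}"
  using assms unfolding simple_graph_def by blast

lemma simple_graph_edgeD:
  assumes "simple_graph G" and "{u, v} \<in> snd G"
  shows "u \<noteq> v" "u \<in> fst G" "v \<in> fst G"
proof -
  obtain p q where "p \<noteq> q" "p \<in> fst G" "q \<in> fst G" "{u, v} = {p, q}"
    using simple_graph_edgeE[OF assms] by blast
  then show "u \<noteq> v" "u \<in> fst G" "v \<in> fst G"
    by (auto simp: doubleton_eq_iff)
qed

lemma simple_graph_no_loop:
  assumes "simple_graph G"
  shows "{u} \<notin> snd G"
  using simple_graph_edgeD(1)[OF assms, of u u] by auto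

lemma simple_graph_edge_at:
  assumes "simple_graph G" and "e \<in> snd G" and "v \<in> e"
  obtains x where "x \<noteq> v" "e = {v, x}"
proof -
  obtain p q where "p \<noteq> q" "e = {p, q}"
    using simple_graph_edgeE[OF assms(1,2)] by blast
  with assms(3) that show thesis
    by (metis emptyE insertE insert_commute)
qed

lemma snd_delete_edge [simp]: "snd (delete_edge G e) = snd G - {e}"
  by (simp add: delete_edge_def)

lemma nimors_move_delete_edge: "e \<in> snd G \<Longrightarrow> nimors_move G (delete_edge G e)"
  unfolding nimors_move_def by blast

lemma simple_graph_delete_edge: "simple_graph G \<Longrightarrow> simple_graph (delete_edge G e)"
  unfolding simple_graph_def delete_edge_def by auto

lemma image_fun_upd_id_fix: "v \<notin> A \<Longrightarrow> image (id(v := u)) A = A"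
  by (auto simp: image_iff)

lemma contract_edge_merge:
  assumes G: "simple_graph G"
  shows "snd (contract_edge G u v) = image (id(v := u)) ` snd G - {{u}}"
proof (rule set_eqI, rule iffI)
  fix e assume "e \<in> snd (contract_edge G u v)"
  then consider "e \<in> snd G" "v \<notin> e" | x where "{v, x} \<in> snd G" "x \<noteq> u" "e = {u, x}"
    unfolding contract_edge_def by auto
  then show "e \<in> image (id(v := u)) ` snd G - {{u}}"
  proof cases
    case 1
    then have "e = image (id(v := u)) e" using image_fun_upd_id_fix by metis
    moreover have "e \<noteq> {u}" using simple_graph_no_loop[OF G] 1(1) by blast
    ultimately show ?thesis using 1(1) by blast
  next
    case 2
    then have "e = image (id(v := u)) {v, x}"
      using simple_graph_edgeD(1)[OF G 2(1)] by (simp add: insert_commute)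
    moreover have "e \<noteq> {u}" using 2 by auto
    ultimately show ?thesis using 2(1) by blast
  qed
next
  fix e assume "e \<in> image (id(v := u)) ` snd G - {{u}}"
  then obtain e0 where e0: "e0 \<in> snd G" "e = image (id(v := u)) e0" "e \<noteq> {u}"
    by blast
  show "e \<in> snd (contract_edge G u v)"
  proof (cases "v \<in> e0")
    case True
    then obtain x where "x \<noteq> v" "e0 = {v, x}"
      using simple_graph_edge_at[OF G e0(1)] by blast
    with e0 show ?thesis
      unfolding contract_edge_def by auto
  next
    case False
    with e0 show ?thesis
      unfolding contract_edge_def using image_fun_upd_id_fix by fastforce
  qed
qed

lemma simple_graph_contract_edge:
  assumes G: "simple_graph G" and uv: "{u, v} \<in> snd G"
  shows "simple_graph (contract_edge G u v)"
proof -
  note u = simple_graph_edgeD[OF G uv]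
  have "\<exists>p q. p \<noteq> q \<and> p \<in> fst G - {v} \<and> q \<in> fst G - {v} \<and> e = {p, q}"
    if "e \<in> snd (contract_edge G u v)" for e
  proof -
    from that obtain e0 where e0: "e0 \<in> snd G" "e = image (id(v := u)) e0" "e \<noteq> {u}"
      unfolding contract_edge_merge[OF G] by blast
    obtain p q where pq: "p \<noteq> q" "p \<in> fst G" "q \<in> fst G" "e0 = {p, q}"
      using simple_graph_edgeE[OF G e0(1)] by blast
    define r where "r = id(v := u)"
    have "r p \<noteq> r q"
      using pq e0(2,3) by (auto simp: r_def)
    moreover have "r p \<in> fst G - {v}" "r q \<in> fst G - {v}"
      using pq u by (auto simp: r_def)
    moreover have "e = {r p, r q}"
      using pq e0(2) by (simp add: r_def)
    ultimately show ?thesis by blast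
  qed
  moreover have "fst (contract_edge G u v) = fst G - {v}"
    by (simp add: contract_edge_def)
  ultimately show ?thesis
    using G by (simp add: simple_graph_def)
qed

lemma simple_graph_nimors_move:
  assumes "simple_graph G" and "nimors_move G G'"
  shows "simple_graph G'"
  using assms(2) unfolding nimors_move_def
proof (elim disjE bexE exE conjE)
  show "simple_graph G'" if "G' = delete_edge G e" for e
    using simple_graph_delete_edge[OF assms(1)] that by simp
  show "simple_graph G'" if "{u, v} \<in> snd G" "G' = contract_edge G u v" for u v
    using simple_graph_contract_edge[OF assms(1)] that by simp
qed

lemma contract_edge_commute:
  assumes "simple_graph G"
  shows "snd (contract_edge G u v) = image (transpose u v) ` snd (contract_edge G v u)"
proof -
  have inj: "inj (image (transpose u v))"
    by (simp add: inj_on_image inj_transpose)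
  have "transpose u v ((id(u := v)) z) = (id(v := u)) z" for z
    by (simp add: transpose_def)
  then have "image (transpose u v) (image (id(u := v)) e) = image (id(v := u)) e" for e
    by (simp only: image_image)
  moreover have "image (image (transpose u v)) {{v}} = {{u}}"
    by simp
  ultimately show ?thesis
    unfolding contract_edge_merge[OF assms] image_set_diff[OF inj] image_image
    by (simp only:)
qed

lemma P_positionD: "P_position G \<Longrightarrow> nimors_move G G' \<Longrightarrow> \<exists>G''. nimors_move G' G'' \<and> P_position G''"
  by (erule P_position.cases) blast

lemma P_position_move_not_P: "P_position G \<Longrightarrow> nimors_move G G' \<Longrightarrow> \<not> P_position G'"
proof (induction G arbitrary: G' rule: P_position.induct)
  case (1 G)
  show ?case
  proof
    assume "P_position G'"
    obtain G'' where "nimors_move G' G''" and "\<And>G'''. nimors_move G'' G''' \<Longrightarrow> \<not> P_position G'''"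
      using "1.IH"[OF "1.prems"] by blast
    with P_positionD[OF \<open>P_position G'\<close>] show False
      by blast
  qed
qed

definition triangle_free_S :: "'a set set \<Rightarrow> bool" where
  "triangle_free_S E \<longleftrightarrow>
     (\<forall>a b. {a, b} \<in> E \<longrightarrow> degree E a \<le> 2 \<or> degree E b \<le> 2) \<and>
     (\<nexists>a b c. a \<noteq> b \<and> b \<noteq> c \<and> a \<noteq> c \<and> {a, b} \<in> E \<and> {b, c} \<in> E \<and> {a, c} \<in> E)"

lemma triangle_free_SI:
  assumes "\<And>a b. {a, b} \<in> E \<Longrightarrow> degree E a \<le> 2 \<or> degree E b \<le> 2"
    and "\<And>a b c. \<lbrakk>a \<noteq> b; b \<noteq> c; a \<noteq> c; {a, b} \<in> E; {b, c} \<in> E; {a, c} \<in> E\<rbrakk> \<Longrightarrow> False"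
  shows "triangle_free_S E"
  using assms unfolding triangle_free_S_def by blast

lemma triangle_free_S_low_degree:
  "triangle_free_S E \<Longrightarrow> {a, b} \<in> E \<Longrightarrow> degree E a \<le> 2 \<or> degree E b \<le> 2"
  unfolding triangle_free_S_def by blast

lemma triangle_free_S_no_triangle:
  "triangle_free_S E \<Longrightarrow> a \<noteq> b \<Longrightarrow> b \<noteq> c \<Longrightarrow> a \<noteq> c \<Longrightarrow> {a, b} \<in> E \<Longrightarrow> {b, c} \<in> E \<Longrightarrow> {a, c} \<notin> E"
  unfolding triangle_free_S_def by blast

lemma degree_mono: "finite E \<Longrightarrow> F \<subseteq> E \<Longrightarrow> degree F x \<le> degree E x"
  unfolding degree_def by (rule card_mono) auto

lemma triangle_free_S_subset:
  assumes E: "finite E" "triangle_free_S E" and F: "F \<subseteq> E"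
  shows "triangle_free_S F"
proof (rule triangle_free_SI)
  fix a b assume "{a, b} \<in> F"
  then have "degree E a \<le> 2 \<or> degree E b \<le> 2"
    using triangle_free_S_low_degree[OF E(2)] F by blast
  then show "degree F a \<le> 2 \<or> degree F b \<le> 2"
    using degree_mono[OF E(1) F] le_trans by blast
next
  fix a b c assume "a \<noteq> b" "b \<noteq> c" "a \<noteq> c" "{a, b} \<in> F" "{b, c} \<in> F" "{a, c} \<in> F"
  then show False
    using triangle_free_S_no_triangle[OF E(2)] F by blast
qed

lemma degree_image_inj:
  assumes "inj h"
  shows "degree (image h ` E) (h a) = degree E a"
proof -
  have inj: "inj (image h)"
    using assms by (simp add: inj_on_image)
  have "{X \<in> image h ` E. h a \<in> X} = image h ` {e \<in> E. a \<in> e}"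
    using inj_image_mem_iff[OF assms] by blast
  then show ?thesis
    unfolding degree_def by (simp add: card_image inj_on_subset[OF inj])
qed

lemma triangle_free_S_preimage:
  assumes h: "inj h" and S: "triangle_free_S (image h ` E)"
  shows "triangle_free_S E"
proof -
  have edge: "{h a, h b} \<in> image h ` E" if "{a, b} \<in> E" for a b
    using imageI[OF that, of "image h"] by simp
  show ?thesis
  proof (rule triangle_free_SI)
    fix a b assume "{a, b} \<in> E"
    then show "degree E a \<le> 2 \<or> degree E b \<le> 2"
      using triangle_free_S_low_degree[OF S edge] unfolding degree_image_inj[OF h] by blast
  next
    fix a b c assume "a \<noteq> b" "b \<noteq> c" "a \<noteq> c" "{a, b} \<in> E" "{b, c} \<in> E" "{a, c} \<in> E"
    then show False
      using triangle_free_S_no_triangle[OF S, of "h a" "h b" "h c"] edge inj_eq[OF h]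
      by simp
  qed
qed

lemma triangle_free_S_image:
  assumes "bij h" and "triangle_free_S E"
  shows "triangle_free_S (image h ` E)"
proof (rule triangle_free_S_preimage)
  show "inj (inv h)"
    using assms(1) by (simp add: bij_imp_bij_inv bij_is_inj)
  show "triangle_free_S (image (inv h) ` image h ` E)"
    using assms by (simp add: image_image image_inv_f_f bij_is_inj)
qed

lemma edges_at_low_degree:
  assumes "finite E" and "{a, b} \<in> E" and "{a, c} \<in> E" and "b \<noteq> c"
    and "degree E a \<le> 2" and "e \<in> E" and "a \<in> e"
  shows "e = {a, b} \<or> e = {a, c}"
proof -
  have sub: "{{a, b}, {a, c}} \<subseteq> {e \<in> E. a \<in> e}"
    using assms(2,3) by auto
  have "card {{a, b}, {a, c}} = 2"
    using assms(4) by (auto simp: doubleton_eq_iff)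
  then have "{{a, b}, {a, c}} = {e \<in> E. a \<in> e}"
    using card_seteq[OF _ sub] assms(1,5) unfolding degree_def by simp
  then show ?thesis
    using assms(6,7) by blast
qed

lemma connected_edges_complete:
  assumes "\<And>x y. x \<in> W \<Longrightarrow> y \<in> W \<Longrightarrow> x \<noteq> y \<Longrightarrow> {x, y} \<in> F"
  shows "connected_edges F W"
  unfolding connected_edges_def edge_adj_def
  by (metis assms r_into_rtranclp rtranclp.rtrancl_refl)

lemma nonseparable_triangle:
  assumes "a \<noteq> b" "b \<noteq> c" "a \<noteq> c"
  shows "nonseparable {{a, b}, {b, c}, {a, c}}"
  unfolding nonseparable_def
proof (intro conjI ballI)
  have "\<Union>{{a, b}, {b, c}, {a, c}} = {a, b, c}"
    by auto
  then show "connected_edges {{a, b}, {b, c}, {a, c}} (\<Union>{{a, b}, {b, c}, {a, c}})"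
    by (auto intro!: connected_edges_complete simp: insert_commute)
  fix z assume "z \<in> \<Union>{{a, b}, {b, c}, {a, c}}"
  then show "connected_edges {e \<in> {{a, b}, {b, c}, {a, c}}. z \<notin> e} (\<Union>{{a, b}, {b, c}, {a, c}} - {z})"
    using assms by (auto intro!: connected_edges_complete simp: insert_commute)
qed simp

lemma triangle_is_block:
  assumes G: "simple_graph G"
    and abc: "a \<noteq> b" "b \<noteq> c" "a \<noteq> c" "{a, b} \<in> snd G" "{b, c} \<in> snd G" "{a, c} \<in> snd G"
    and low: "degree (snd G) a \<le> 2" "degree (snd G) b \<le> 2"
  shows "is_block (snd G) {{a, b}, {b, c}, {a, c}}"
proof -
  define T where "T = {{a, b}, {b, c}, {a, c}}"
  have fin: "finite (snd G)"
    using simple_graph_finite_edges[OF G] .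
  have at_a: "e = {a, b} \<or> e = {a, c}" if "e \<in> snd G" "a \<in> e" for e
    using edges_at_low_degree[OF fin abc(4,6,2) low(1) that] .
  have at_b: "e = {a, b} \<or> e = {b, c}" if "e \<in> snd G" "b \<in> e" for e
  proof -
    have "{b, a} \<in> snd G"
      using abc(4) by (simp add: insert_commute)
    from edges_at_low_degree[OF fin this abc(5) abc(3) low(2) that] show ?thesis
      by (simp add: insert_commute)
  qed
  have "F = T" if F: "T \<subseteq> F" "F \<subseteq> snd G" "nonseparable F" for F
  proof (rule ccontr)
    assume "F \<noteq> T"
    then obtain e where e: "e \<in> F" "e \<notin> T"
      using F(1) by blast
    then obtain y where y: "y \<in> e" "y \<noteq> c"
      using simple_graph_edgeE[OF G, of e] F(2) by blast
    have "a \<notin> e" "b \<notin> e"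
      using at_a at_b e F(2) unfolding T_def by blast+
    have "c \<in> \<Union>F" "a \<in> \<Union>F - {c}" "y \<in> \<Union>F - {c}"
      using F(1) abc(3) e(1) y unfolding T_def by blast+
    then have "(edge_adj {e \<in> F. c \<notin> e})\<^sup>*\<^sup>* a y"
      using F(3) unfolding nonseparable_def connected_edges_def by blast
    then have "y \<in> {a, b}"
    proof (induction rule: rtranclp_induct)
      case (step x z)
      then have "{x, z} \<in> snd G" "c \<notin> {x, z}"
        using F(2) unfolding edge_adj_def by auto
      with step.IH show ?case
        using at_a at_b abc(1) by (auto simp: doubleton_eq_iff)
    qed simp
    then show False
      using \<open>a \<notin> e\<close> \<open>b \<notin> e\<close> y(1) by blast
  qed
  then show ?thesis
    using nonseparable_triangle[OF abc(1-3)] abc(4-6)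
    unfolding is_block_def T_def by blast
qed

lemma property_S_imp_triangle_free_S:
  assumes G: "simple_graph G" and S: "property_S G"
  shows "triangle_free_S (snd G)"
proof (rule triangle_free_SI)
  show low: "degree (snd G) a \<le> 2 \<or> degree (snd G) b \<le> 2" if "{a, b} \<in> snd G" for a b
    using S that unfolding property_S_def by fastforce
  have no_low_triangle: False
    if "p \<noteq> q" "q \<noteq> r" "p \<noteq> r" "{p, q} \<in> snd G" "{q, r} \<in> snd G" "{p, r} \<in> snd G"
      "degree (snd G) p \<le> 2" "degree (snd G) q \<le> 2" for p q r
  proof -
    have "is_block (snd G) {{p, q}, {q, r}, {p, r}}"
      using triangle_is_block[OF G that] .
    moreover have "is_triangle {{p, q}, {q, r}, {p, r}}"
      using that(1-3) unfolding is_triangle_def by blast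
    ultimately show False
      using S unfolding property_S_def by blast
  qed
  fix a b c assume abc: "a \<noteq> b" "b \<noteq> c" "a \<noteq> c" "{a, b} \<in> snd G" "{b, c} \<in> snd G" "{a, c} \<in> snd G"
  then consider "degree (snd G) a \<le> 2" "degree (snd G) b \<le> 2"
    | "degree (snd G) b \<le> 2" "degree (snd G) c \<le> 2"
    | "degree (snd G) a \<le> 2" "degree (snd G) c \<le> 2"
    using low[OF abc(4)] low[OF abc(5)] low[OF abc(6)] by blast
  then show False
  proof cases
    case 1
    then show False using no_low_triangle[of a b c] abc by blast
  next
    case 2
    then show False using no_low_triangle[of b c a] abc by (simp add: insert_commute)
  next
    case 3
    then show False using no_low_triangle[of a c b] abc by (simp add: insert_commute)
  qed
qed

text \<open>\<open>E'\<close> is the edge set after a move from \<open>E\<close>; the reply is the deletion of \<open>g\<close>.\<close>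

definition has_reply :: "'a set set \<Rightarrow> 'a set set \<Rightarrow> bool" where
  "has_reply E E' \<longleftrightarrow> (\<exists>g\<in>E'. triangle_free_S (E' - {g}) \<and> card (E' - {g}) + 2 = card E)"

lemma has_replyI:
  assumes "finite E" and "triangle_free_S E"
    and "g \<in> E'" and "E' - {g} \<subseteq> E" and "card (E' - {g}) + 2 = card E"
  shows "has_reply E E'"
  using assms triangle_free_S_subset unfolding has_reply_def by blast

lemma has_reply_delete:
  assumes E: "finite E" "triangle_free_S E" and e: "e \<in> E" and two: "2 \<le> card E"
  shows "has_reply E (E - {e})"
proof -
  have "card (E - {e}) + 1 = card E"
    using E(1) e two by (simp add: card_Diff_singleton)
  then have "card (E - {e}) > 0"
    using two by linarith
  then obtain g where g: "g \<in> E - {e}"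
    by (metis card_gt_0_iff ex_in_conv)
  have card: "card (E - {e} - {g}) + 2 = card E"
    using E(1) e g two by (simp add: card_Diff_singleton)
  show ?thesis
    by (rule has_replyI[OF E g _ card]) blast
qed

lemma has_reply_image:
  assumes h: "bij h" and reply: "has_reply E E'"
  shows "has_reply E (image h ` E')"
proof -
  obtain g where g: "g \<in> E'" "triangle_free_S (E' - {g})" "card (E' - {g}) + 2 = card E"
    using reply unfolding has_reply_def by blast
  have inj: "inj (image h)"
    using h by (simp add: bij_is_inj inj_on_image)
  have "image h ` E' - {h ` g} = image h ` (E' - {g})"
    by (simp add: image_set_diff[OF inj])
  moreover have "triangle_free_S (image h ` (E' - {g}))"
    using triangle_free_S_image[OF h g(2)] .
  moreover have "card (image h ` (E' - {g})) = card (E' - {g})"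
    using card_image[OF inj_on_subset[OF inj]] by blast
  ultimately show ?thesis
    using g(1,3) unfolding has_reply_def by (metis imageI)
qed

lemma contract_edge_pendant:
  assumes G: "simple_graph G" and uv: "{u, v} \<in> snd G"
    and pendant: "\<And>x. {v, x} \<in> snd G \<Longrightarrow> x = u"
  shows "snd (contract_edge G u v) = snd G - {{u, v}}"
proof -
  have "v \<notin> e" if e: "e \<in> snd G" "e \<noteq> {u, v}" for e
  proof
    assume "v \<in> e"
    then obtain x where x: "e = {v, x}"
      using simple_graph_edge_at[OF G e(1)] by blast
    then have "x = u"
      using pendant e(1) by blast
    with x e(2) show False
      by (simp add: insert_commute)
  qed
  then have "{e \<in> snd G. v \<notin> e} = snd G - {{u, v}}"
    by blast
  moreover have "{{u, x} | x. {v, x} \<in> snd G \<and> x \<noteq> u} = {}"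
    using pendant by blast
  ultimately show ?thesis
    unfolding contract_edge_def snd_conv by (simp only: Un_empty_right)
qed

lemma contract_edge_path:
  assumes G: "simple_graph G" and S: "triangle_free_S (snd G)"
    and uv: "{u, v} \<in> snd G" and vx: "{v, x} \<in> snd G" "x \<noteq> u"
    and low: "degree (snd G) v \<le> 2"
  shows "{u, x} \<in> snd (contract_edge G u v)"
    and "snd (contract_edge G u v) - {{u, x}} = snd G - {{v, u}, {v, x}}"
proof -
  have "u \<noteq> v" "v \<noteq> x"
    using simple_graph_edgeD(1)[OF G] uv vx(1) by blast+
  have vu: "{v, u} \<in> snd G"
    using uv by (simp add: insert_commute)
  have at_v: "e = {v, u} \<or> e = {v, x}" if "e \<in> snd G" "v \<in> e" for e
    using edges_at_low_degree[OF simple_graph_finite_edges[OF G] vu vx(1) vx(2)[symmetric] low that] .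
  have "y = x" if "{v, y} \<in> snd G" "y \<noteq> u" for y
    using at_v[OF that(1)] that(2) \<open>u \<noteq> v\<close> \<open>v \<noteq> x\<close> by (auto simp: doubleton_eq_iff)
  then have new: "{{u, y} | y. {v, y} \<in> snd G \<and> y \<noteq> u} = {{u, x}}"
    using vx by blast
  then show "{u, x} \<in> snd (contract_edge G u v)"
    by (simp add: contract_edge_def)
  have "{u, x} \<notin> snd G"
    using triangle_free_S_no_triangle[OF S \<open>u \<noteq> v\<close> \<open>v \<noteq> x\<close> vx(2)[symmetric] uv vx(1)] .
  moreover have "{e \<in> snd G. v \<notin> e} = snd G - {{v, u}, {v, x}}"
    using at_v by auto
  ultimately show "snd (contract_edge G u v) - {{u, x}} = snd G - {{v, u}, {v, x}}"
    using new by (auto simp: contract_edge_def)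
qed

lemma contract_edge_has_reply:
  assumes G: "simple_graph G" and S: "triangle_free_S (snd G)" and uv: "{u, v} \<in> snd G"
    and low: "degree (snd G) v \<le> 2" and two: "2 \<le> card (snd G)"
  shows "has_reply (snd G) (snd (contract_edge G u v))"
proof (cases "\<exists>x. {v, x} \<in> snd G \<and> x \<noteq> u")
  case False
  then show ?thesis
    using contract_edge_pendant[OF G uv] has_reply_delete[OF simple_graph_finite_edges[OF G] S uv two]
    by auto
next
  case True
  then obtain x where vx: "{v, x} \<in> snd G" "x \<noteq> u"
    by blast
  have vu: "{v, u} \<in> snd G"
    using uv by (simp add: insert_commute)
  have "card {{v, u}, {v, x}} = 2"
    using vx(2) by (auto simp: doubleton_eq_iff)
  then have "card (snd G - {{v, u}, {v, x}}) + 2 = card (snd G)"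
    using simple_graph_finite_edges[OF G] vu vx(1) two by (simp add: card_Diff_subset)
  then show ?thesis
    using has_replyI[OF simple_graph_finite_edges[OF G] S contract_edge_path(1)[OF G S uv vx low]]
      contract_edge_path(2)[OF G S uv vx low]
    by auto
qed

lemma nimors_move_has_reply:
  assumes G: "simple_graph G" and S: "triangle_free_S (snd G)" and two: "2 \<le> card (snd G)"
    and move: "nimors_move G G'"
  shows "has_reply (snd G) (snd G')"
  using move unfolding nimors_move_def
proof (elim disjE bexE exE conjE)
  fix e assume "e \<in> snd G" "G' = delete_edge G e"
  then show ?thesis
    using has_reply_delete[OF simple_graph_finite_edges[OF G] S _ two] by simp
next
  fix u v assume uv: "{u, v} \<in> snd G" and G': "G' = contract_edge G u v"
  from triangle_free_S_low_degree[OF S uv] show ?thesis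
  proof
    assume "degree (snd G) u \<le> 2"
    moreover have "{v, u} \<in> snd G"
      using uv by (simp add: insert_commute)
    ultimately have "has_reply (snd G) (snd (contract_edge G v u))"
      using contract_edge_has_reply[OF G S _ _ two] by blast
    then show ?thesis
      unfolding G' contract_edge_commute[OF G, of u v]
      by (rule has_reply_image[OF bij_transpose])
  next
    assume "degree (snd G) v \<le> 2"
    then show ?thesis
      unfolding G' by (rule contract_edge_has_reply[OF G S uv _ two])
  qed
qed

lemma nimors_move_answer:
  assumes G: "simple_graph G" and S: "triangle_free_S (snd G)" and two: "2 \<le> card (snd G)"
    and move: "nimors_move G G'"
  obtains G'' where "nimors_move G' G''" "simple_graph G''" "triangle_free_S (snd G'')"
    "card (snd G'') + 2 = card (snd G)"
proof -
  obtain g where g: "g \<in> snd G'" "triangle_free_S (snd G' - {g})"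
    "card (snd G' - {g}) + 2 = card (snd G)"
    using nimors_move_has_reply[OF G S two move] unfolding has_reply_def by blast
  show thesis
    using that[OF nimors_move_delete_edge[OF g(1)]] g(2,3)
      simple_graph_delete_edge[OF simple_graph_nimors_move[OF G move]]
    by simp
qed

lemma P_position_iff_even_edges:
  assumes "simple_graph G" and "triangle_free_S (snd G)"
  shows "P_position G \<longleftrightarrow> even (card (snd G))"
  using assms
proof (induction "card (snd G)" arbitrary: G rule: less_induct)
  case less
  note G = less.prems(1) and S = less.prems(2)
  have fin: "finite (snd G)"
    using simple_graph_finite_edges[OF G] .
  show ?case
  proof (cases "even (card (snd G))")
    case True
    have "P_position G"
    proof (rule P_position.intros)
      fix G' assume move: "nimors_move G G'"
      then have "card (snd G) \<noteq> 0"
        using fin unfolding nimors_move_def by auto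
      with True have two: "2 \<le> card (snd G)"
        by presburger
      obtain G'' where G'': "nimors_move G' G''" "simple_graph G''" "triangle_free_S (snd G'')"
        and card: "card (snd G'') + 2 = card (snd G)"
        using nimors_move_answer[OF G S two move] .
      have "card (snd G'') < card (snd G)" and "even (card (snd G''))"
        using card True by presburger+
      with G'' less.hyps show "\<exists>G''. nimors_move G' G'' \<and> P_position G''"
        by blast
    qed
    with True show ?thesis
      by simp
  next
    case False
    then obtain e where e: "e \<in> snd G"
      by fastforce
    have card: "card (snd (delete_edge G e)) + 1 = card (snd G)"
      using card_Suc_Diff1[OF fin e] by simp
    have "simple_graph (delete_edge G e)"
      using simple_graph_delete_edge[OF G] .
    moreover have "triangle_free_S (snd (delete_edge G e))"
      using triangle_free_S_subset[OF fin S] by simp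
    moreover have "card (snd (delete_edge G e)) < card (snd G)"
      and "even (card (snd (delete_edge G e)))"
      using card False by presburger+
    ultimately have "P_position (delete_edge G e)"
      using less.hyps by blast
    then have "\<not> P_position G"
      using P_position_move_not_P nimors_move_delete_edge[OF e] by blast
    with False show ?thesis
      by simp
  qed
qed

theorem theorem3:
  fixes G :: "'a graph"
  assumes "simple_graph G" and "property_S G"
  shows "P_position G \<longleftrightarrow> even (card (snd G))"
  using P_position_iff_even_edges[OF assms(1) property_S_imp_triangle_free_S[OF assms]] .

end
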